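(* For a regular curve $\gamma: I\to\mathbb{E}^4$, the following are equivalent: (1) $\gamma$ admits a generalized Bishop frame of type D; (2) there exist a smooth unit normal vector field $\mathbb{D}_1$ along $\gamma$ and a smooth function $d_1$ on $I$ such that $\mathbb{T}'=d_1\mathbb{D}_1$.
   Context: A regular curve $\gamma: I\to\mathbb{E}^4$ ($I$ an open interval) is considered with arc-length parametrization; $\mathbb{T}=\gamma'$ is its unit tangent vector. A frame on $\gamma$ is an ordered orthonormal frame $(\mathbb{T},\mathbb{Z}_1,\mathbb{Z}_2,\mathbb{Z}_3)$ of smooth vector fields along $\gamma$ whose first vector is $\mathbb{T}$; it is identified with the smooth map $\mathbb{Z}: I\to O(4)$ whose rows are these vectors. Its coefficient matrix is the $\mathfrak{o}(4)$-valued function $X$ with $\mathbb{Z}'=X\mathbb{Z}$. A frame is of type D if, after possibly permuting $\mathbb{Z}_1,\mathbb{Z}_2,\mathbb{Z}_3$ (keeping $\mathbb{T}$ first), its coefficient matrix has the form $\begin{pmatrix}0&x_1&0&0\\-x_1&0&x_2&x_3\\0&-x_2&0&0\\0&-x_3&0&0\end{pmatrix}$ for some smooth functions $x_1,x_2,x_3$. *)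

theory Defs
  imports "HOL-Analysis.Analysis"
begin

definition smooth_on_real :: "real set \<Rightarrow> (real \<Rightarrow> 'a::real_normed_vector) \<Rightarrow> bool" where
  "smooth_on_real I f \<longleftrightarrow>
     (\<exists>D :: nat \<Rightarrow> real \<Rightarrow> 'a. D 0 = f \<and>
        (\<forall>n. \<forall>t\<in>I. (D n has_vector_derivative D (Suc n) t) (at t)))"

definition open_interval :: "real set \<Rightarrow> bool" where
  "open_interval I \<longleftrightarrow> is_interval I \<and> open I \<and> I \<noteq> {}"

definition tangent :: "(real \<Rightarrow> real^4) \<Rightarrow> real \<Rightarrow> real^4" where
  "tangent \<gamma> t = vector_derivative \<gamma> (at t)"

definition arclength_curve :: "real set \<Rightarrow> (real \<Rightarrow> real^4) \<Rightarrow> bool" where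
  "arclength_curve I \<gamma> \<longleftrightarrow> smooth_on_real I \<gamma> \<and> (\<forall>t\<in>I. norm (tangent \<gamma> t) = 1)"

text \<open>A frame on gamma: smooth map Z into O(4) whose rows are (T, Z1, Z2, Z3).\<close>
definition is_frame :: "real set \<Rightarrow> (real \<Rightarrow> real^4) \<Rightarrow> (real \<Rightarrow> real^4^4) \<Rightarrow> bool" where
  "is_frame I \<gamma> Z \<longleftrightarrow> smooth_on_real I Z \<and>
     (\<forall>t\<in>I. orthogonal_matrix (Z t) \<and> Z t $ 1 = tangent \<gamma> t)"

text \<open>Coefficient matrix X with Z' = X Z, i.e. X = Z' Z^T (Z orthogonal).\<close>
definition coeff_matrix :: "(real \<Rightarrow> real^4^4) \<Rightarrow> real \<Rightarrow> real^4^4" where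
  "coeff_matrix Z t = vector_derivative Z (at t) ** transpose (Z t)"

definition typeD_matrix :: "real \<Rightarrow> real \<Rightarrow> real \<Rightarrow> real^4^4" where
  "typeD_matrix x1 x2 x3 = vector [vector [0, x1, 0, 0],
                                   vector [-x1, 0, x2, x3],
                                   vector [0, -x2, 0, 0],
                                   vector [0, -x3, 0, 0]]"

text \<open>Frame of type D: after permuting Z1,Z2,Z3 (keeping T first, i.e. a permutation
  p of the row indices with p 1 = 1) the coefficient matrix has the type D form.
  Permuting the rows by p turns the coefficient matrix X into (X (p i) (p j)).\<close>
definition frame_typeD :: "real set \<Rightarrow> (real \<Rightarrow> real^4) \<Rightarrow> (real \<Rightarrow> real^4^4) \<Rightarrow> bool" where
  "frame_typeD I \<gamma> Z \<longleftrightarrow> is_frame I \<gamma> Z \<and>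
     (\<exists>p :: 4 \<Rightarrow> 4. p permutes UNIV \<and> p 1 = 1 \<and>
       (\<exists>x1 x2 x3 :: real \<Rightarrow> real.
          smooth_on_real I x1 \<and> smooth_on_real I x2 \<and> smooth_on_real I x3 \<and>
          (\<forall>t\<in>I. (\<chi> i j. coeff_matrix Z t $ p i $ p j) = typeD_matrix (x1 t) (x2 t) (x3 t))))"

end

theory Submission
  imports Defs
begin

(* (1) => (2): the first row of Z' = X Z reads T' = x1 Z_(p 2); take D1 = Z_(p 2), d1 = x1.
   (2) => (1): let Omega = wedge D1 D1', the skew operator y |-> (y . D1) D1' - (y . D1') D1.
   Since |D1| = 1 and T is orthogonal to D1, we have D1 . D1' = 0 and T . D1' = -d1, so both
   T and D1 solve the linear equation Y' = Omega Y. Solve it, by Picard iteration, with the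
   rows of an orthogonal matrix extending T(t0), D1(t0) as initial values. Skewness keeps the
   solutions orthonormal and makes them unique, so the first two rows are T and D1; and the
   coefficient matrix (Omega Z_i . Z_j) of any orthonormal frame moved by wedge Z_2 b has
   type D. *)

section \<open>Smoothness\<close>

primrec nth_differentiable_on ::
    "nat \<Rightarrow> real set \<Rightarrow> (real \<Rightarrow> 'a::real_normed_vector) \<Rightarrow> bool"
  where
    "nth_differentiable_on 0 I f = True"
  | "nth_differentiable_on (Suc n) I f \<longleftrightarrow>
       (\<exists>f'. (\<forall>t\<in>I. (f has_vector_derivative f' t) (at t)) \<and> nth_differentiable_on n I f')"

lemma nth_differentiable_on_SucD:
  "nth_differentiable_on (Suc n) I f \<Longrightarrow> nth_differentiable_on n I f"
proof (induction n arbitrary: f)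
  case (Suc n)
  then obtain f' where
    "\<forall>t\<in>I. (f has_vector_derivative f' t) (at t)" "nth_differentiable_on (Suc n) I f'"
    by auto
  with Suc.IH show ?case by auto
qed simp

lemma nth_differentiable_on_cong:
  assumes "open I" "nth_differentiable_on n I f" "\<And>t. t \<in> I \<Longrightarrow> f t = g t"
  shows "nth_differentiable_on n I g"
  using assms(2,3)
proof (induction n arbitrary: f g)
  case (Suc n)
  then obtain f' where f': "\<forall>t\<in>I. (f has_vector_derivative f' t) (at t)" "nth_differentiable_on n I f'"
    by auto
  have "\<forall>t\<in>I. (g has_vector_derivative f' t) (at t)"
    using f'(1) Suc.prems(2) assms(1) has_vector_derivative_transform_within_open by blast
  with f'(2) show ?case by auto
qed simp

lemma nth_differentiable_on_add:
  "nth_differentiable_on n I f \<Longrightarrow> nth_differentiable_on n I g \<Longrightarrow>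
    nth_differentiable_on n I (\<lambda>t. f t + g t)"
proof (induction n arbitrary: f g)
  case (Suc n)
  then obtain f' g' where
    "\<forall>t\<in>I. (f has_vector_derivative f' t) (at t)" "nth_differentiable_on n I f'"
    "\<forall>t\<in>I. (g has_vector_derivative g' t) (at t)" "nth_differentiable_on n I g'"
    by auto
  with Suc.IH show ?case
    by (auto intro!: exI[of _ "\<lambda>t. f' t + g' t"] has_vector_derivative_add)
qed simp

lemma nth_differentiable_on_bilinear:
  fixes prod :: "'a::real_normed_vector \<Rightarrow> 'b::real_normed_vector \<Rightarrow> 'c::real_normed_vector"
  assumes "bounded_bilinear prod"
  shows "nth_differentiable_on n I f \<Longrightarrow> nth_differentiable_on n I g \<Longrightarrow>
    nth_differentiable_on n I (\<lambda>t. prod (f t) (g t))"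
proof (induction n arbitrary: f g)
  case (Suc n)
  then obtain f' g' where
    f': "\<forall>t\<in>I. (f has_vector_derivative f' t) (at t)" "nth_differentiable_on n I f'" and
    g': "\<forall>t\<in>I. (g has_vector_derivative g' t) (at t)" "nth_differentiable_on n I g'"
    by auto
  have "nth_differentiable_on n I f" "nth_differentiable_on n I g"
    using Suc.prems nth_differentiable_on_SucD by blast+
  then have "nth_differentiable_on n I (\<lambda>t. prod (f t) (g' t) + prod (f' t) (g t))"
    using Suc.IH f'(2) g'(2) nth_differentiable_on_add by blast
  moreover have "\<forall>t\<in>I. ((\<lambda>t. prod (f t) (g t)) has_vector_derivative
      prod (f t) (g' t) + prod (f' t) (g t)) (at t)"
    using f'(1) g'(1) bounded_bilinear.has_vector_derivative[OF assms] by blast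
  ultimately show ?case by auto
qed simp

lemma nth_differentiable_on_vector_derivative:
  assumes "open I" "nth_differentiable_on (Suc n) I f"
  shows "\<forall>t\<in>I. (f has_vector_derivative vector_derivative f (at t)) (at t)"
    and "nth_differentiable_on n I (\<lambda>t. vector_derivative f (at t))"
proof -
  obtain f' where f': "\<forall>t\<in>I. (f has_vector_derivative f' t) (at t)" "nth_differentiable_on n I f'"
    using assms(2) by auto
  then have "vector_derivative f (at t) = f' t" if "t \<in> I" for t
    using that vector_derivative_at by blast
  with f' show "\<forall>t\<in>I. (f has_vector_derivative vector_derivative f (at t)) (at t)"
    and "nth_differentiable_on n I (\<lambda>t. vector_derivative f (at t))"
    using nth_differentiable_on_cong[OF assms(1) f'(2), of "\<lambda>t. vector_derivative f (at t)"]
    by auto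
qed

lemma smooth_on_real_iff_nth_differentiable_on:
  assumes "open I"
  shows "smooth_on_real I f \<longleftrightarrow> (\<forall>n. nth_differentiable_on n I f)"
proof
  assume "smooth_on_real I f"
  then obtain D where D: "D 0 = f" "\<And>n. \<forall>t\<in>I. (D n has_vector_derivative D (Suc n) t) (at t)"
    unfolding smooth_on_real_def by blast
  have "\<forall>m. nth_differentiable_on n I (D m)" for n
    by (induction n) (use D(2) in auto)
  then show "\<forall>n. nth_differentiable_on n I f"
    using D(1) by metis
next
  assume f: "\<forall>n. nth_differentiable_on n I f"
  define D where "D n = ((\<lambda>g t. vector_derivative g (at t)) ^^ n) f" for n
  have D_smooth: "\<forall>k. nth_differentiable_on k I (D n)" for n
  proof (induction n)
    case (Suc n)
    have "D (Suc n) = (\<lambda>t. vector_derivative (D n) (at t))"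
      by (simp add: D_def)
    then show ?case
      using Suc.IH nth_differentiable_on_vector_derivative(2)[OF assms] by metis
  qed (use f D_def in simp)
  have "\<forall>t\<in>I. (D n has_vector_derivative D (Suc n) t) (at t)" for n
    using nth_differentiable_on_vector_derivative(1)[OF assms D_smooth[of n, rule_format, of "Suc 0"]]
    by (simp add: D_def)
  then show "smooth_on_real I f"
    unfolding smooth_on_real_def by (intro exI[of _ D]) (simp add: D_def)
qed

lemma smooth_on_real_imp_continuous_on: "smooth_on_real I f \<Longrightarrow> continuous_on I f"
  unfolding smooth_on_real_def
  by (metis continuous_at_imp_continuous_on has_vector_derivative_continuous)

lemma smooth_on_real_vector_derivative:
  assumes "open I" "smooth_on_real I f"
  shows "\<forall>t\<in>I. (f has_vector_derivative vector_derivative f (at t)) (at t)"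
    and "smooth_on_real I (\<lambda>t. vector_derivative f (at t))"
  using assms nth_differentiable_on_vector_derivative[OF assms(1)]
  unfolding smooth_on_real_iff_nth_differentiable_on[OF assms(1)] by blast+

lemma smooth_on_real_linear:
  assumes "bounded_linear L" "smooth_on_real I f"
  shows "smooth_on_real I (\<lambda>t. L (f t))"
proof -
  obtain D where "D 0 = f" "\<And>n. \<forall>t\<in>I. (D n has_vector_derivative D (Suc n) t) (at t)"
    using assms(2) unfolding smooth_on_real_def by blast
  then show ?thesis
    unfolding smooth_on_real_def
    by (intro exI[of _ "\<lambda>n t. L (D n t)"]) (simp add: bounded_linear.has_vector_derivative[OF assms(1)])
qed

lemma smooth_on_real_diff:
  assumes "smooth_on_real I f" "smooth_on_real I g"
  shows "smooth_on_real I (\<lambda>t. f t - g t)"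
proof -
  obtain D where "D 0 = f" "\<And>n. \<forall>t\<in>I. (D n has_vector_derivative D (Suc n) t) (at t)"
    using assms(1) unfolding smooth_on_real_def by blast
  moreover obtain E where "E 0 = g" "\<And>n. \<forall>t\<in>I. (E n has_vector_derivative E (Suc n) t) (at t)"
    using assms(2) unfolding smooth_on_real_def by blast
  ultimately show ?thesis
    unfolding smooth_on_real_def
    by (intro exI[of _ "\<lambda>n t. D n t - E n t"]) (simp add: has_vector_derivative_diff)
qed

lemma smooth_on_real_bilinear:
  fixes prod :: "'a::real_normed_vector \<Rightarrow> 'b::real_normed_vector \<Rightarrow> 'c::real_normed_vector"
  assumes "bounded_bilinear prod" "open I" "smooth_on_real I f" "smooth_on_real I g"
  shows "smooth_on_real I (\<lambda>t. prod (f t) (g t))"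
  using assms(3,4) nth_differentiable_on_bilinear[OF assms(1)]
  unfolding smooth_on_real_iff_nth_differentiable_on[OF assms(2)] by blast

lemma has_vector_derivative_vec_lambda:
  fixes F :: "'n::finite \<Rightarrow> real \<Rightarrow> 'a::euclidean_space"
  assumes "\<And>i. (F i has_vector_derivative F' i) (at t)"
  shows "((\<lambda>s. \<chi> i. F i s) has_vector_derivative (\<chi> i. F' i)) (at t)"
proof -
  have axis: "(\<chi> i. G i) = (\<Sum>j\<in>UNIV. axis j (G j))" for G :: "'n \<Rightarrow> 'a"
    by (simp add: vec_eq_iff axis_def if_distrib cong: if_cong)
  have "bounded_linear (axis j :: 'a \<Rightarrow> 'a^'n)" for j
    by (rule bounded_linearI') (simp_all add: axis_def vec_eq_iff)
  from bounded_linear.has_vector_derivative[OF this assms]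
  have "((\<lambda>s. \<Sum>j\<in>UNIV. axis j (F j s)) has_vector_derivative (\<Sum>j\<in>UNIV. axis j (F' j))) (at t)"
    by (rule has_vector_derivative_sum)
  then show ?thesis
    by (simp only: axis)
qed

lemma smooth_on_real_vec_lambda:
  fixes F :: "'n::finite \<Rightarrow> real \<Rightarrow> 'a::euclidean_space"
  assumes "\<And>i. smooth_on_real I (F i)"
  shows "smooth_on_real I (\<lambda>t. \<chi> i. F i t)"
proof -
  have "\<forall>i. \<exists>D. D 0 = F i \<and> (\<forall>n. \<forall>t\<in>I. (D n has_vector_derivative D (Suc n) t) (at t))"
    using assms unfolding smooth_on_real_def by blast
  then obtain D where D: "\<And>i. D i 0 = F i"
    "\<And>i n t. t \<in> I \<Longrightarrow> (D i n has_vector_derivative D i (Suc n) t) (at t)"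
    by (metis choice)
  show ?thesis
    unfolding smooth_on_real_def
  proof (intro exI[of _ "\<lambda>n t. \<chi> i. D i n t"] conjI allI ballI)
    fix n t assume "t \<in> I"
    then show "((\<lambda>t. \<chi> i. D i n t) has_vector_derivative (\<chi> i. D i (Suc n) t)) (at t)"
      by (intro has_vector_derivative_vec_lambda D(2))
  qed (simp add: D(1))
qed

lemma linear_ode_solution_smooth:
  fixes A :: "real \<Rightarrow> 'a::real_normed_vector \<Rightarrow>\<^sub>L 'a"
  assumes "open I" "smooth_on_real I A"
    and "\<And>t. t \<in> I \<Longrightarrow> (Y has_vector_derivative A t (Y t)) (at t)"
  shows "smooth_on_real I Y"
proof -
  have "nth_differentiable_on n I Y" for n
  proof (induction n)
    case (Suc n)
    have "nth_differentiable_on n I A"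
      using assms(2) unfolding smooth_on_real_iff_nth_differentiable_on[OF assms(1)] by blast
    then have "nth_differentiable_on n I (\<lambda>t. A t (Y t))"
      using nth_differentiable_on_bilinear[OF bounded_bilinear_blinfun_apply] Suc.IH by blast
    with assms(3) show ?case
      by (auto intro!: exI[of _ "\<lambda>t. A t (Y t)"])
  qed simp
  then show ?thesis
    by (simp add: smooth_on_real_iff_nth_differentiable_on[OF assms(1)] del: nth_differentiable_on.simps(2))
qed

lemma inner_derivative_eq_0_if_constant_on:
  assumes "open I" "t \<in> I" "\<And>s. s \<in> I \<Longrightarrow> u s \<bullet> v s = c"
    and "(u has_vector_derivative u') (at t)" "(v has_vector_derivative v') (at t)"
  shows "u t \<bullet> v' + u' \<bullet> v t = 0"
proof -
  have "((\<lambda>s. u s \<bullet> v s) has_vector_derivative u t \<bullet> v' + u' \<bullet> v t) (at t)"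
    by (rule bounded_bilinear.has_vector_derivative[OF bounded_bilinear_inner assms(4,5)])
  then have "((\<lambda>s. c) has_vector_derivative u t \<bullet> v' + u' \<bullet> v t) (at t)"
    by (rule has_vector_derivative_transform_within_open[OF _ assms(1,2)]) (rule assms(3))
  then show ?thesis
    using vector_derivative_unique_at[OF _ has_vector_derivative_const] by blast
qed

section \<open>Linear differential equations\<close>

lemma norm_le_power_of_derivative_le_power:
  fixes g :: "real \<Rightarrow> 'a::real_normed_vector"
  assumes "g t0 = 0" "t \<in> {a..b}" "t0 \<in> {a..b}"
    and g': "\<And>s. s \<in> {a..b} \<Longrightarrow> (g has_vector_derivative g' s) (at s)"
    and bound: "\<And>s. s \<in> {a..b} \<Longrightarrow> norm (g' s) \<le> c * \<bar>s - t0\<bar> ^ k"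
  shows "norm (g t) \<le> c * \<bar>t - t0\<bar> ^ Suc k / Suc k"
proof -
  have cont: "continuous_on {u..v} g" if "{u..v} \<subseteq> {a..b}" for u v
  proof (rule continuous_at_imp_continuous_on, rule ballI)
    fix s assume "s \<in> {u..v}"
    with that show "isCont g s"
      using g' has_vector_derivative_continuous by blast
  qed
  consider "t0 < t" | "t < t0" | "t = t0" by linarith
  then show ?thesis
  proof cases
    case 1
    have "norm (g t - g t0) \<le> c * (t - t0) ^ Suc k / Suc k - c * (t0 - t0) ^ Suc k / Suc k"
    proof (rule differentiable_bound_general[OF 1 cont _ g'])
      show "continuous_on {t0..t} (\<lambda>s. c * (s - t0) ^ Suc k / Suc k)"
        by (intro continuous_intros) auto
      fix s assume s: "t0 < s" "s < t"
      have "((\<lambda>s. (s - t0) ^ Suc k) has_real_derivative Suc k * (s - t0) ^ k) (at s)"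
        using DERIV_power[OF DERIV_diff[OF DERIV_ident DERIV_const], where n="Suc k"] by simp
      then have "((\<lambda>s. c * (s - t0) ^ Suc k / Suc k) has_real_derivative
          c * (Suc k * (s - t0) ^ k) / Suc k) (at s)"
        by (intro DERIV_cdivide DERIV_cmult)
      then show "((\<lambda>s. c * (s - t0) ^ Suc k / Suc k) has_vector_derivative c * (s - t0) ^ k) (at s)"
        by (simp add: has_real_derivative_iff_has_vector_derivative)
      show "norm (g' s) \<le> c * (s - t0) ^ k"
        using bound[of s] s assms(2,3) by simp
    qed (use assms(2,3) in auto)
    then show ?thesis using 1 assms(1) by simp
  next
    case 2
    have "norm (g t0 - g t) \<le> - c * (t0 - t0) ^ Suc k / Suc k - (- c * (t0 - t) ^ Suc k / Suc k)"
    proof (rule differentiable_bound_general[OF 2 cont _ g'])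
      show "continuous_on {t..t0} (\<lambda>s. - c * (t0 - s) ^ Suc k / Suc k)"
        by (intro continuous_intros) auto
      fix s assume s: "t < s" "s < t0"
      have "((\<lambda>s. (t0 - s) ^ Suc k) has_real_derivative - (Suc k * (t0 - s) ^ k)) (at s)"
        using DERIV_power[OF DERIV_diff[OF DERIV_const DERIV_ident], where n="Suc k"] by simp
      then have "((\<lambda>s. - c * (t0 - s) ^ Suc k / Suc k) has_real_derivative
          - c * - (Suc k * (t0 - s) ^ k) / Suc k) (at s)"
        by (intro DERIV_cdivide DERIV_cmult)
      then show "((\<lambda>s. - c * (t0 - s) ^ Suc k / Suc k) has_vector_derivative c * (t0 - s) ^ k) (at s)"
        by (simp add: has_real_derivative_iff_has_vector_derivative)
      show "norm (g' s) \<le> c * (t0 - s) ^ k"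
        using bound[of s] s assms(2,3) by simp
    qed (use assms(2,3) in auto)
    then show ?thesis using 2 assms(1) by simp
  qed (simp add: assms(1))
qed

lemma interval_obtain_atLeastAtMost:
  fixes x y :: real
  assumes "is_interval I" "open I" "x \<in> I" "y \<in> I"
  obtains a b where "a < x" "a < y" "x < b" "y < b" "{a..b} \<subseteq> I"
proof -
  have "min x y \<in> I" "max x y \<in> I"
    using assms(3,4) by (simp_all add: min_def max_def)
  then obtain d e where "d > 0" "cball (min x y) d \<subseteq> I" "e > 0" "cball (max x y) e \<subseteq> I"
    using assms(2) by (meson open_contains_cball_eq)
  moreover have "min x y - d \<in> cball (min x y) d" "max x y + e \<in> cball (max x y) e"
    using \<open>d > 0\<close> \<open>e > 0\<close> by (simp_all add: dist_real_def)
  ultimately have lo: "min x y - d \<in> I" and hi: "max x y + e \<in> I"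
    by blast+
  have "{min x y - d..max x y + e} \<subseteq> I"
  proof
    fix s assume "s \<in> {min x y - d..max x y + e}"
    then show "s \<in> I"
      using mem_is_interval_1_I[OF assms(1) lo hi] by simp
  qed
  then show thesis
    using \<open>d > 0\<close> \<open>e > 0\<close> by (intro that) auto
qed

lemma has_vector_derivative_interval_integral:
  fixes f :: "real \<Rightarrow> 'a::euclidean_space"
  assumes "is_interval I" "open I" "t0 \<in> I" "t \<in> I" "continuous_on I f"
  shows "((\<lambda>t. LBINT s=t0..t. f s) has_vector_derivative f t) (at t)"
proof -
  obtain a b where ab: "a < t" "a < t0" "t < b" "t0 < b" "{a..b} \<subseteq> I"
    using interval_obtain_atLeastAtMost[OF assms(1,2,4,3)] .
  have "((\<lambda>t. LBINT s=t0..t. f s) has_vector_derivative f t) (at t within {a..b})"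
    by (rule interval_integral_FTC2[OF _ _ continuous_on_subset[OF assms(5) ab(5)]])
      (use ab in linarith)+
  then have "((\<lambda>t. LBINT s=t0..t. f s) has_vector_derivative f t) (at t within {a<..<b})"
    by (rule has_vector_derivative_within_subset) (simp add: subset_iff)
  moreover have "t \<in> {a<..<b}"
    using ab by simp
  ultimately show ?thesis
    by (simp add: at_within_open[OF _ open_greaterThanLessThan])
qed

lemma has_vector_derivative_uniform_limit:
  fixes f :: "nat \<Rightarrow> real \<Rightarrow> 'a::banach"
  assumes "open S" "convex S" "x \<in> S"
    and f': "\<And>n x. x \<in> S \<Longrightarrow> (f n has_vector_derivative f' n x) (at x)"
    and lim: "\<And>x. x \<in> S \<Longrightarrow> (\<lambda>n. f n x) \<longlonglongrightarrow> g x"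
    and unif: "uniform_limit S f' g' sequentially"
  shows "(g has_vector_derivative g' x) (at x)"
proof -
  have "\<exists>h. \<forall>y\<in>S. (\<lambda>n. f n y) \<longlonglongrightarrow> h y \<and>
      (h has_derivative (\<lambda>u. u *\<^sub>R g' y)) (at y within S)"
  proof (rule has_derivative_sequence[where f' = "\<lambda>n y u. u *\<^sub>R f' n y"])
    show "convex S" "x \<in> S" "(\<lambda>n. f n x) \<longlonglongrightarrow> g x"
      using assms(2,3) lim by auto
    show "(f n has_derivative (\<lambda>u. u *\<^sub>R f' n y)) (at y within S)" if "y \<in> S" for n y
      using f'[OF that] unfolding has_vector_derivative_def by (rule has_derivative_at_withinI)
    fix e :: real assume "e > 0"
    with unif have "\<forall>\<^sub>F n in sequentially. \<forall>y\<in>S. dist (f' n y) (g' y) < e"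
      by (rule uniform_limitD)
    then show "\<forall>\<^sub>F n in sequentially. \<forall>y\<in>S. \<forall>u. norm (u *\<^sub>R f' n y - u *\<^sub>R g' y) \<le> e * norm u"
    proof (rule eventually_mono, intro ballI allI)
      fix n y u assume "\<forall>y\<in>S. dist (f' n y) (g' y) < e" "y \<in> S"
      then have "norm (f' n y - g' y) \<le> e"
        by (simp add: dist_norm less_imp_le)
      then have "\<bar>u\<bar> * norm (f' n y - g' y) \<le> \<bar>u\<bar> * e"
        by (rule mult_left_mono) simp
      then show "norm (u *\<^sub>R f' n y - u *\<^sub>R g' y) \<le> e * norm u"
        by (simp add: scaleR_diff_right[symmetric] mult.commute)
    qed
  qed
  then obtain h where h: "\<And>y. y \<in> S \<Longrightarrow> (\<lambda>n. f n y) \<longlonglongrightarrow> h y"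
    "(h has_derivative (\<lambda>u. u *\<^sub>R g' x)) (at x)"
    using assms(1,3) at_within_open by metis
  have "h y = g y" if "y \<in> S" for y
    using LIMSEQ_unique[OF h(1)[OF that] lim[OF that]] .
  then have "(g has_derivative (\<lambda>u. u *\<^sub>R g' x)) (at x)"
    using has_derivative_transform_within_open[OF h(2) assms(1,3)] by blast
  then show ?thesis
    by (simp add: has_vector_derivative_def)
qed

lemma uniform_limit_blinfun_apply:
  fixes A :: "'s \<Rightarrow> 'a::real_normed_vector \<Rightarrow>\<^sub>L 'b::real_normed_vector"
  assumes "uniform_limit S f g F" "\<And>x. x \<in> S \<Longrightarrow> norm (A x) \<le> M"
  shows "uniform_limit S (\<lambda>n x. A x (f n x)) (\<lambda>x. A x (g x)) F"
proof (rule uniform_limitI)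
  fix e :: real assume "e > 0"
  then have "e / (\<bar>M\<bar> + 1) > 0"
    by simp
  with assms(1) have "\<forall>\<^sub>F n in F. \<forall>x\<in>S. dist (f n x) (g x) < e / (\<bar>M\<bar> + 1)"
    by (rule uniform_limitD)
  then show "\<forall>\<^sub>F n in F. \<forall>x\<in>S. dist (A x (f n x)) (A x (g x)) < e"
  proof (rule eventually_mono, intro ballI)
    fix n x assume close: "\<forall>x\<in>S. dist (f n x) (g x) < e / (\<bar>M\<bar> + 1)" and "x \<in> S"
    have "dist (A x (f n x)) (A x (g x)) = norm (A x (f n x - g x))"
      by (simp add: dist_norm blinfun.diff_right)
    also have "\<dots> \<le> norm (A x) * norm (f n x - g x)"
      by (rule norm_blinfun)
    also have "\<dots> \<le> (\<bar>M\<bar> + 1) * norm (f n x - g x)"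
      using assms(2)[OF \<open>x \<in> S\<close>] by (intro mult_right_mono) auto
    also have "\<dots> < (\<bar>M\<bar> + 1) * (e / (\<bar>M\<bar> + 1))"
      using close \<open>x \<in> S\<close> by (intro mult_strict_left_mono) (auto simp: dist_norm)
    also have "\<dots> = e"
      by simp
    finally show "dist (A x (f n x)) (A x (g x)) < e" .
  qed
qed

(* Starting from 0 instead of y makes the first increment equal to y, so that all increments
   obey the same estimate and their series is the solution. *)

definition picard_iterates ::
    "real \<Rightarrow> (real \<Rightarrow> 'a::euclidean_space \<Rightarrow>\<^sub>L 'a) \<Rightarrow> 'a \<Rightarrow> nat \<Rightarrow> real \<Rightarrow> 'a"
  where "picard_iterates t0 A y = rec_nat (\<lambda>t. 0) (\<lambda>k P (t::real). y + (LBINT s=t0..t. A s (P s)))"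

lemma picard_iterates_0 [simp]: "picard_iterates t0 A y 0 = (\<lambda>t. 0)"
  by (simp add: picard_iterates_def)

lemma picard_iterates_Suc:
  "picard_iterates t0 A y (Suc k) = (\<lambda>t::real. y + (LBINT s=t0..t. A s (picard_iterates t0 A y k s)))"
  by (simp add: picard_iterates_def)

lemma picard_iterates_Suc_initial [simp]: "picard_iterates t0 A y (Suc k) t0 = y"
  by (simp add: picard_iterates_Suc)

lemma picard_iterates_has_vector_derivative:
  fixes A :: "real \<Rightarrow> 'a::euclidean_space \<Rightarrow>\<^sub>L 'a"
  assumes "is_interval I" "open I" "t0 \<in> I" "continuous_on I A" "t \<in> I"
  shows "(picard_iterates t0 A y (Suc k) has_vector_derivative A t (picard_iterates t0 A y k t)) (at t)"
    and "continuous_on I (picard_iterates t0 A y k)"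
proof -
  let ?P = "picard_iterates t0 A y"
  have deriv: "(?P (Suc k) has_vector_derivative A t (?P k t)) (at t)"
    if "t \<in> I" "continuous_on I (?P k)" for k t
  proof -
    have "continuous_on I (\<lambda>s. A s (?P k s))"
      using bounded_bilinear.continuous_on[OF bounded_bilinear_blinfun_apply assms(4) that(2)] .
    from has_vector_derivative_interval_integral[OF assms(1-3) that(1) this]
    show ?thesis
      unfolding picard_iterates_Suc by (rule has_vector_derivative_add[OF has_vector_derivative_const, simplified])
  qed
  have cont: "continuous_on I (?P k)" for k
  proof (induction k)
    case (Suc k)
    then show ?case
      using deriv by (meson continuous_at_imp_continuous_on has_vector_derivative_continuous)
  qed simp
  show "continuous_on I (?P k)"
    by (rule cont)
  show "(?P (Suc k) has_vector_derivative A t (?P k t)) (at t)"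
    using deriv[OF assms(5) cont] .
qed

lemma norm_picard_increment_le:
  fixes A :: "real \<Rightarrow> 'a::euclidean_space \<Rightarrow>\<^sub>L 'a"
  assumes "is_interval I" "open I" "t0 \<in> I" "continuous_on I A"
    and "{a..b} \<subseteq> I" "t0 \<in> {a..b}" "\<And>s. s \<in> {a..b} \<Longrightarrow> norm (A s) \<le> M" "s \<in> {a..b}"
  shows "norm (picard_iterates t0 A y (Suc k) s - picard_iterates t0 A y k s)
    \<le> norm y * (M * \<bar>s - t0\<bar>) ^ k / fact k"
  using assms(8)
proof (induction k arbitrary: s)
  case 0
  then show ?case
    by (simp add: picard_iterates_Suc)
next
  case (Suc k)
  let ?P = "picard_iterates t0 A y"
  let ?c = "norm y * M ^ Suc k / fact k"
  have "norm (?P (Suc (Suc k)) s - ?P (Suc k) s) \<le> ?c * \<bar>s - t0\<bar> ^ Suc k / Suc k"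
  proof (rule norm_le_power_of_derivative_le_power[OF _ Suc.prems assms(6)])
    fix r assume r: "r \<in> {a..b}"
    then have "r \<in> I"
      using assms(5) by blast
    show "((\<lambda>s. ?P (Suc (Suc k)) s - ?P (Suc k) s) has_vector_derivative
        A r (?P (Suc k) r - ?P k r)) (at r)"
      using has_vector_derivative_diff[OF
          picard_iterates_has_vector_derivative(1)[OF assms(1-4) \<open>r \<in> I\<close>]
          picard_iterates_has_vector_derivative(1)[OF assms(1-4) \<open>r \<in> I\<close>]]
      by (simp add: blinfun.diff_right)
    have "norm (A r (?P (Suc k) r - ?P k r)) \<le> norm (A r) * norm (?P (Suc k) r - ?P k r)"
      by (rule norm_blinfun)
    also have "\<dots> \<le> M * (norm y * (M * \<bar>r - t0\<bar>) ^ k / fact k)"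
      using assms(7)[OF r] Suc.IH[OF r] order_trans[OF norm_ge_zero assms(7)[OF r]]
      by (intro mult_mono) auto
    also have "\<dots> = ?c * \<bar>r - t0\<bar> ^ k"
      by (simp add: power_mult_distrib)
    finally show "norm (A r (?P (Suc k) r - ?P k r)) \<le> ?c * \<bar>r - t0\<bar> ^ k" .
  qed simp
  also have "\<dots> = norm y * (M * \<bar>s - t0\<bar>) ^ Suc k / fact (Suc k)"
    by (simp add: power_mult_distrib algebra_simps)
  finally show ?case .
qed

lemma uniform_limit_picard_iterates:
  fixes A :: "real \<Rightarrow> 'a::euclidean_space \<Rightarrow>\<^sub>L 'a"
  assumes "is_interval I" "open I" "t0 \<in> I" "continuous_on I A"
    and "{a..b} \<subseteq> I" "t0 \<in> {a..b}" "\<And>s. s \<in> {a..b} \<Longrightarrow> norm (A s) \<le> M"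
  shows "uniform_limit {a..b} (picard_iterates t0 A y)
    (\<lambda>t. \<Sum>k. picard_iterates t0 A y (Suc k) t - picard_iterates t0 A y k t) sequentially"
proof -
  let ?P = "picard_iterates t0 A y"
  define B where "B k = norm y * (M * (b - a)) ^ k / fact k" for k
  have "M \<ge> 0"
    using order_trans[OF norm_ge_zero assms(7)[OF assms(6)]] .
  have "norm (?P (Suc k) s - ?P k s) \<le> B k" if "s \<in> {a..b}" for k s
  proof -
    have "\<bar>s - t0\<bar> \<le> b - a"
      using that assms(6) by auto
    then have "norm y * (M * \<bar>s - t0\<bar>) ^ k / fact k \<le> B k"
      unfolding B_def using \<open>M \<ge> 0\<close>
      by (intro mult_left_mono divide_right_mono power_mono mult_left_mono) auto
    with norm_picard_increment_le[where y=y and k=k, OF assms(1-7) that] show ?thesis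
      by linarith
  qed
  moreover have "summable B"
  proof -
    have "B = (\<lambda>k. norm y * ((M * (b - a)) ^ k /\<^sub>R fact k))"
      by (simp add: B_def fun_eq_iff divide_inverse mult.commute)
    then show ?thesis
      using summable_mult[OF summable_exp_generic, of "norm y" "M * (b - a)"] by simp
  qed
  ultimately have "uniform_limit {a..b} (\<lambda>n t. \<Sum>k<n. ?P (Suc k) t - ?P k t)
      (\<lambda>t. \<Sum>k. ?P (Suc k) t - ?P k t) sequentially"
    by (intro Weierstrass_m_test_ev always_eventually) auto
  moreover have "(\<Sum>k<n. ?P (Suc k) t - ?P k t) = ?P n t" for n t
    using sum_lessThan_telescope[of "\<lambda>k. ?P k t" n] by simp
  ultimately show ?thesis
    by simp
qed

lemma linear_ode_exists:
  fixes A :: "real \<Rightarrow> 'a::euclidean_space \<Rightarrow>\<^sub>L 'a"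
  assumes "is_interval I" "open I" "t0 \<in> I" "continuous_on I A"
  obtains Y where "Y t0 = y" "\<And>t. t \<in> I \<Longrightarrow> (Y has_vector_derivative A t (Y t)) (at t)"
proof -
  let ?P = "picard_iterates t0 A y"
  define Y where "Y t = (\<Sum>k. ?P (Suc k) t - ?P k t)" for t
  have "(\<lambda>k. ?P (Suc k) t0 - ?P k t0) = (\<lambda>k. if k = 0 then y else 0)"
  proof
    fix k show "?P (Suc k) t0 - ?P k t0 = (if k = 0 then y else 0)"
      by (cases k) simp_all
  qed
  then have "Y t0 = y"
    unfolding Y_def using sums_unique[OF sums_single[of 0 "\<lambda>_. y"]] by simp
  moreover have "(Y has_vector_derivative A t (Y t)) (at t)" if t: "t \<in> I" for t
  proof -
    obtain a b where ab: "a < t" "a < t0" "t < b" "t0 < b" "{a..b} \<subseteq> I"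
      using interval_obtain_atLeastAtMost[OF assms(1,2) t assms(3)] .
    have "bounded (A ` {a..b})"
      by (intro compact_imp_bounded compact_continuous_image continuous_on_subset[OF assms(4) ab(5)]
          compact_Icc)
    then obtain M where M: "\<And>s. s \<in> {a..b} \<Longrightarrow> norm (A s) \<le> M"
      unfolding bounded_iff by blast
    have unif: "uniform_limit {a..b} ?P Y sequentially"
      unfolding Y_def using ab by (intro uniform_limit_picard_iterates[OF assms ab(5) _ M]) auto
    show ?thesis
    proof (rule has_vector_derivative_uniform_limit[where f = "\<lambda>n. ?P (Suc n)" and S = "{a<..<b}"])
      show "open {a<..<b}" "convex {a<..<b}" "t \<in> {a<..<b}"
        using ab by auto
      show "uniform_limit {a<..<b} (\<lambda>n x. A x (?P n x)) (\<lambda>x. A x (Y x)) sequentially"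
        by (rule uniform_limit_blinfun_apply[OF uniform_limit_on_subset[OF unif] M]) auto
      fix x assume "x \<in> {a<..<b}"
      then have "x \<in> I" "x \<in> {a..b}"
        using ab(5) by auto
      show "(?P (Suc n) has_vector_derivative A x (?P n x)) (at x)" for n
        by (rule picard_iterates_has_vector_derivative(1)[OF assms \<open>x \<in> I\<close>])
      show "(\<lambda>n. ?P (Suc n) x) \<longlonglongrightarrow> Y x"
        using LIMSEQ_Suc[OF tendsto_uniform_limitI[OF unif \<open>x \<in> {a..b}\<close>]] .
    qed
  qed
  ultimately show thesis
    using that by blast
qed

section \<open>Skew-symmetric equations and orthonormal frames\<close>

definition skew :: "'a::real_inner \<Rightarrow>\<^sub>L 'a \<Rightarrow> bool"
  where "skew A \<longleftrightarrow> (\<forall>x y. A x \<bullet> y = - (x \<bullet> A y))"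

lemma skew_linear_ode_inner_constant:
  fixes A :: "real \<Rightarrow> 'a::real_inner \<Rightarrow>\<^sub>L 'a"
  assumes "is_interval I" "t0 \<in> I" "t \<in> I" "\<And>s. s \<in> I \<Longrightarrow> skew (A s)"
    and Y: "\<And>s. s \<in> I \<Longrightarrow> (Y has_vector_derivative A s (Y s)) (at s)"
    and Z: "\<And>s. s \<in> I \<Longrightarrow> (Z has_vector_derivative A s (Z s)) (at s)"
  shows "Y t \<bullet> Z t = Y t0 \<bullet> Z t0"
proof -
  have "((\<lambda>s. Y s \<bullet> Z s) has_vector_derivative 0) (at s within I)" if "s \<in> I" for s
  proof -
    have "((\<lambda>s. Y s \<bullet> Z s) has_vector_derivative Y s \<bullet> A s (Z s) + A s (Y s) \<bullet> Z s) (at s)"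
      by (rule bounded_bilinear.has_vector_derivative[OF bounded_bilinear_inner Y[OF that] Z[OF that]])
    moreover have "Y s \<bullet> A s (Z s) + A s (Y s) \<bullet> Z s = 0"
      using assms(4)[OF that] by (simp add: skew_def)
    ultimately show ?thesis
      by (simp add: has_vector_derivative_at_within)
  qed
  moreover have "convex I"
    using assms(1) by (simp add: is_interval_convex)
  ultimately obtain c where "\<And>s. s \<in> I \<Longrightarrow> Y s \<bullet> Z s = c"
    using has_vector_derivative_zero_constant by blast
  then show ?thesis
    using assms(2,3) by simp
qed

lemma skew_linear_ode_unique:
  fixes A :: "real \<Rightarrow> 'a::real_inner \<Rightarrow>\<^sub>L 'a"
  assumes "is_interval I" "t0 \<in> I" "t \<in> I" "\<And>s. s \<in> I \<Longrightarrow> skew (A s)"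
    and Y: "\<And>s. s \<in> I \<Longrightarrow> (Y has_vector_derivative A s (Y s)) (at s)"
    and Z: "\<And>s. s \<in> I \<Longrightarrow> (Z has_vector_derivative A s (Z s)) (at s)"
    and "Y t0 = Z t0"
  shows "Y t = Z t"
proof -
  have "((\<lambda>s. Y s - Z s) has_vector_derivative A s (Y s - Z s)) (at s)" if "s \<in> I" for s
    using has_vector_derivative_diff[OF Y[OF that] Z[OF that]] by (simp add: blinfun.diff_right)
  from skew_linear_ode_inner_constant[OF assms(1-4) this this]
  show ?thesis
    using assms(7) by simp
qed

definition wedge :: "'a::real_inner \<Rightarrow> 'a \<Rightarrow> 'a \<Rightarrow>\<^sub>L 'a"
  where "wedge a b =
    (blinfun_scaleR_left b o\<^sub>L blinfun_inner_left a) - (blinfun_scaleR_left a o\<^sub>L blinfun_inner_left b)"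

lemma wedge_apply: "wedge a b y = (y \<bullet> a) *\<^sub>R b - (y \<bullet> b) *\<^sub>R a"
  by (simp add: wedge_def blinfun.diff_left)

lemma skew_wedge: "skew (wedge a b)"
  by (simp add: skew_def wedge_apply inner_diff_left inner_diff_right inner_commute)

lemma smooth_on_real_wedge:
  fixes a b :: "real \<Rightarrow> 'a::real_inner"
  assumes "open I" "smooth_on_real I a" "smooth_on_real I b"
  shows "smooth_on_real I (\<lambda>t. wedge (a t) (b t))"
proof -
  have "smooth_on_real I (\<lambda>t. (blinfun_scaleR_left (v t) o\<^sub>L blinfun_inner_left (u t)))"
    if "smooth_on_real I u" "smooth_on_real I v" for u v :: "real \<Rightarrow> 'a"
    using smooth_on_real_bilinear[OF bounded_bilinear_blinfun_compose assms(1)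
        smooth_on_real_linear[OF bounded_linear_blinfun_scaleR_left that(2)]
        smooth_on_real_linear[OF bounded_linear_blinfun_inner_left that(1)]] .
  then show ?thesis
    unfolding wedge_def using assms(2,3) by (intro smooth_on_real_diff)
qed

lemma orthogonal_matrix_iff_rows_inner:
  fixes Q :: "real^'n^'n"
  shows "orthogonal_matrix Q \<longleftrightarrow> (\<forall>i j. Q $ i \<bullet> Q $ j = (if i = j then 1 else 0))"
proof -
  have "row i Q = Q $ i" for i
    by (simp add: row_def vec_eq_iff)
  then show ?thesis
    unfolding orthogonal_matrix_orthonormal_rows orthogonal_def norm_eq_1 by auto
qed

lemma unit_orthogonal_to_finite_set:
  fixes S :: "'a::euclidean_space set"
  assumes "finite S" "card S < DIM('a)"
  obtains e where "norm e = 1" "\<And>y. y \<in> S \<Longrightarrow> e \<bullet> y = 0"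
proof -
  have "dim S < DIM('a)"
    using dim_le_card'[OF assms(1)] assms(2) by simp
  then obtain x where "x \<noteq> 0" "\<And>y. y \<in> span S \<Longrightarrow> orthogonal x y"
    using orthogonal_to_subspace_exists by blast
  then show thesis
    by (intro that[of "x /\<^sub>R norm x"]) (auto simp: orthogonal_def span_base)
qed

lemma orthonormal_pair_extends_to_orthogonal_matrix:
  fixes a b :: "real^4"
  assumes "norm a = 1" "norm b = 1" "a \<bullet> b = 0"
  obtains Q :: "real^4^4" where "orthogonal_matrix Q" "Q $ 1 = a" "Q $ 2 = b"
proof -
  obtain c where c: "norm c = 1" "\<And>y. y \<in> {a, b} \<Longrightarrow> c \<bullet> y = 0"
    by (rule unit_orthogonal_to_finite_set[of "{a, b}"]) (simp_all add: card_insert_if)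
  obtain d where d: "norm d = 1" "\<And>y. y \<in> {a, b, c} \<Longrightarrow> d \<bullet> y = 0"
    by (rule unit_orthogonal_to_finite_set[of "{a, b, c}"]) (simp_all add: card_insert_if)
  show thesis
  proof (rule that[of "vector [a, b, c, d]"])
    show "orthogonal_matrix (vector [a, b, c, d] :: real^4^4)"
      using assms c d
      by (simp add: orthogonal_matrix_iff_rows_inner forall_4 vector_def norm_eq_1 inner_commute)
  qed (simp_all add: vector_def)
qed

lemma skew_linear_ode_orthonormal_frame:
  fixes A :: "real \<Rightarrow> (real^'n) \<Rightarrow>\<^sub>L (real^'n)" and Q :: "real^'n^'n"
  assumes "is_interval I" "open I" "t0 \<in> I" "smooth_on_real I A" "\<And>t. t \<in> I \<Longrightarrow> skew (A t)"
    and "orthogonal_matrix Q"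
  obtains Z where "smooth_on_real I Z" "Z t0 = Q" "\<And>t. t \<in> I \<Longrightarrow> orthogonal_matrix (Z t)"
    "\<And>t i. t \<in> I \<Longrightarrow> ((\<lambda>s. Z s $ i) has_vector_derivative A t (Z t $ i)) (at t)"
proof -
  have "\<forall>i. \<exists>Y. Y t0 = Q $ i \<and> (\<forall>t\<in>I. (Y has_vector_derivative A t (Y t)) (at t))"
    using linear_ode_exists[OF assms(1-3) smooth_on_real_imp_continuous_on[OF assms(4)]] by metis
  then obtain Y where Y: "\<And>i. Y i t0 = Q $ i"
    "\<And>i t. t \<in> I \<Longrightarrow> (Y i has_vector_derivative A t (Y i t)) (at t)"
    by metis
  define Z where "Z t = (\<chi> i. Y i t)" for t
  have "orthogonal_matrix (Z t)" if "t \<in> I" for t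
  proof -
    have "Y i t \<bullet> Y j t = Q $ i \<bullet> Q $ j" for i j
      using skew_linear_ode_inner_constant[OF assms(1,3) that assms(5) Y(2) Y(2)] Y(1) by simp
    then show ?thesis
      using assms(6) by (simp add: orthogonal_matrix_iff_rows_inner Z_def)
  qed
  moreover have "smooth_on_real I Z"
    unfolding Z_def
    by (intro smooth_on_real_vec_lambda linear_ode_solution_smooth[OF assms(2,4)] Y(2))
  ultimately show thesis
    using that Y by (simp add: Z_def vec_eq_iff)
qed

section \<open>Frames of type D\<close>

lemma coeff_matrix_nth:
  assumes "(Z has_vector_derivative Z') (at t)"
  shows "coeff_matrix Z t $ i $ j = Z' $ i \<bullet> Z t $ j"
  using vector_derivative_at[OF assms]
  by (simp add: coeff_matrix_def matrix_matrix_mult_def transpose_def inner_vec_def mult.commute)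

lemma coeff_matrix_mult:
  assumes "orthogonal_matrix (Z t)"
  shows "coeff_matrix Z t ** Z t = vector_derivative Z (at t)"
  using assms by (simp add: coeff_matrix_def matrix_mul_assoc[symmetric] orthogonal_matrix)

lemma typeD_first_row_of_derivative:
  assumes "orthogonal_matrix (Z t)" "p permutes UNIV" "p 1 = 1"
    and "(\<chi> i j. coeff_matrix Z t $ p i $ p j) = typeD_matrix x1 x2 x3"
  shows "vector_derivative Z (at t) $ 1 = x1 *\<^sub>R Z t $ p 2"
proof -
  have "vector_derivative Z (at t) $ 1 = (coeff_matrix Z t ** Z t) $ 1"
    using coeff_matrix_mult[of Z t, OF assms(1)] by simp
  also have "\<dots> = (\<Sum>k\<in>UNIV. coeff_matrix Z t $ 1 $ k *\<^sub>R Z t $ k)"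
    by (simp add: vec_eq_iff matrix_matrix_mult_def sum_component)
  also have "\<dots> = (\<Sum>k\<in>UNIV. coeff_matrix Z t $ p 1 $ p k *\<^sub>R Z t $ p k)"
    using sum.permute[OF assms(2), of "\<lambda>k. coeff_matrix Z t $ 1 $ k *\<^sub>R Z t $ k"] assms(3) by simp
  also have "\<dots> = (\<Sum>k\<in>UNIV. typeD_matrix x1 x2 x3 $ 1 $ k *\<^sub>R Z t $ p k)"
    using assms(4) by (simp add: vec_eq_iff)
  also have "\<dots> = x1 *\<^sub>R Z t $ p 2"
  proof -
    have "typeD_matrix x1 x2 x3 $ 1 $ k = (if k = 2 then x1 else 0)" for k
      using exhaust_4[of k] by (auto simp: typeD_matrix_def vector_def)
    then show ?thesis
      by (simp add: if_distrib[of "\<lambda>c. c *\<^sub>R _"] cong: if_cong)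
  qed
  finally show ?thesis .
qed

lemma frame_typeD_tangent_derivative:
  assumes "open I" "frame_typeD I \<gamma> Z"
  shows "\<exists>(D1 :: real \<Rightarrow> real^4) (d1 :: real \<Rightarrow> real).
    smooth_on_real I D1 \<and> smooth_on_real I d1 \<and>
    (\<forall>t\<in>I. norm (D1 t) = 1 \<and> D1 t \<bullet> tangent \<gamma> t = 0 \<and>
      vector_derivative (tangent \<gamma>) (at t) = d1 t *\<^sub>R D1 t)"
proof -
  obtain p x1 x2 x3 where Z: "smooth_on_real I Z" "\<And>t. t \<in> I \<Longrightarrow> orthogonal_matrix (Z t)"
    "\<And>t. t \<in> I \<Longrightarrow> Z t $ 1 = tangent \<gamma> t"
    and p: "p permutes UNIV" "p 1 = 1" and x1: "smooth_on_real I x1"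
    and X: "\<And>t. t \<in> I \<Longrightarrow> (\<chi> i j. coeff_matrix Z t $ p i $ p j) = typeD_matrix (x1 t) (x2 t) (x3 t)"
    using assms(2) unfolding frame_typeD_def is_frame_def by blast
  have "p 2 \<noteq> p 1"
    using permutes_inj[OF p(1)] by (simp add: inj_eq)
  then have p2: "p 2 \<noteq> 1"
    using p(2) by simp
  have "norm (Z t $ p 2) = 1 \<and> Z t $ p 2 \<bullet> tangent \<gamma> t = 0 \<and>
      vector_derivative (tangent \<gamma>) (at t) = x1 t *\<^sub>R Z t $ p 2" if t: "t \<in> I" for t
  proof (intro conjI)
    show "norm (Z t $ p 2) = 1" "Z t $ p 2 \<bullet> tangent \<gamma> t = 0"
      using Z(2)[OF t] p2 Z(3)[OF t, symmetric]
      by (simp_all add: orthogonal_matrix_iff_rows_inner norm_eq_1)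
    have "(Z has_vector_derivative vector_derivative Z (at t)) (at t)"
      using smooth_on_real_vector_derivative(1)[OF assms(1) Z(1)] t by blast
    from bounded_linear.has_vector_derivative[OF bounded_linear_vec_nth this]
    have "(tangent \<gamma> has_vector_derivative vector_derivative Z (at t) $ 1) (at t)"
      using has_vector_derivative_transform_within_open assms(1) t Z(3) by blast
    then show "vector_derivative (tangent \<gamma>) (at t) = x1 t *\<^sub>R Z t $ p 2"
      using typeD_first_row_of_derivative[OF Z(2)[OF t] p X[OF t]] vector_derivative_at by simp
  qed
  moreover have "smooth_on_real I (\<lambda>t. Z t $ p 2)"
    by (rule smooth_on_real_linear[OF bounded_linear_vec_nth Z(1)])
  ultimately show ?thesis
    using x1 by blast
qed

lemma wedge_rows_typeD:
  fixes Q :: "real^4^4"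
  assumes "orthogonal_matrix Q"
  shows "(\<chi> i j. wedge (Q $ 2) b (Q $ i) \<bullet> Q $ j) =
    typeD_matrix (- (b \<bullet> Q $ 1)) (b \<bullet> Q $ 3) (b \<bullet> Q $ 4)"
  using assms
  unfolding orthogonal_matrix_iff_rows_inner
  by (simp add: vec_eq_iff forall_4 typeD_matrix_def vector_def wedge_apply
      inner_diff_left inner_diff_right inner_commute)

lemma coeff_matrix_wedge_frame:
  fixes Z :: "real \<Rightarrow> real^4^4"
  assumes "orthogonal_matrix (Z t)"
    and "\<And>i. ((\<lambda>s. Z s $ i) has_vector_derivative wedge (Z t $ 2) b (Z t $ i)) (at t)"
  shows "coeff_matrix Z t = typeD_matrix (- (b \<bullet> Z t $ 1)) (b \<bullet> Z t $ 3) (b \<bullet> Z t $ 4)"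
proof -
  have "((\<lambda>s. \<chi> i. Z s $ i) has_vector_derivative (\<chi> i. wedge (Z t $ 2) b (Z t $ i))) (at t)"
    by (intro has_vector_derivative_vec_lambda assms(2))
  then have "coeff_matrix Z t = (\<chi> i j. wedge (Z t $ 2) b (Z t $ i) \<bullet> Z t $ j)"
    using coeff_matrix_nth by (simp add: vec_eq_iff)
  also have "\<dots> = typeD_matrix (- (b \<bullet> Z t $ 1)) (b \<bullet> Z t $ 3) (b \<bullet> Z t $ 4)"
    by (rule wedge_rows_typeD[OF assms(1)])
  finally show ?thesis .
qed

lemma frame_typeD_intro:
  assumes "smooth_on_real I Z" "\<And>t. t \<in> I \<Longrightarrow> orthogonal_matrix (Z t)"
    "\<And>t. t \<in> I \<Longrightarrow> Z t $ 1 = tangent \<gamma> t"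
    and "smooth_on_real I x1" "smooth_on_real I x2" "smooth_on_real I x3"
    and "\<And>t. t \<in> I \<Longrightarrow> coeff_matrix Z t = typeD_matrix (x1 t) (x2 t) (x3 t)"
  shows "frame_typeD I \<gamma> Z"
proof -
  have id_witness: "\<exists>x1 x2 x3. smooth_on_real I x1 \<and> smooth_on_real I x2 \<and> smooth_on_real I x3 \<and>
      (\<forall>t\<in>I. (\<chi> i j. coeff_matrix Z t $ id i $ id j) = typeD_matrix (x1 t) (x2 t) (x3 t))"
    by (rule exI[of _ x1], rule exI[of _ x2], rule exI[of _ x3]) (use assms(4-7) in simp)
  have "\<exists>p. p permutes UNIV \<and> p 1 = 1 \<and>
      (\<exists>x1 x2 x3. smooth_on_real I x1 \<and> smooth_on_real I x2 \<and> smooth_on_real I x3 \<and>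
        (\<forall>t\<in>I. (\<chi> i j. coeff_matrix Z t $ p i $ p j) = typeD_matrix (x1 t) (x2 t) (x3 t)))"
    by (rule exI[of _ id]) (use id_witness permutes_id in simp)
  then show ?thesis
    unfolding frame_typeD_def is_frame_def using assms(1-3) by simp
qed

lemma tangent_has_vector_derivative:
  assumes "open I" "arclength_curve I \<gamma>" "t \<in> I"
  shows "(tangent \<gamma> has_vector_derivative vector_derivative (tangent \<gamma>) (at t)) (at t)"
proof -
  have "smooth_on_real I (tangent \<gamma>)"
    using smooth_on_real_vector_derivative(2)[OF assms(1)] assms(2)
    unfolding arclength_curve_def tangent_def[abs_def] by blast
  then show ?thesis
    using smooth_on_real_vector_derivative(1)[OF assms(1)] assms(3) by blast
qed

lemma tangent_and_normal_solve_wedge_ode: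
  fixes D1 :: "real \<Rightarrow> real^4"
  assumes "open I" "arclength_curve I \<gamma>" "smooth_on_real I D1" "t \<in> I"
    and D1: "\<forall>t\<in>I. norm (D1 t) = 1 \<and> D1 t \<bullet> tangent \<gamma> t = 0 \<and>
      vector_derivative (tangent \<gamma>) (at t) = d1 t *\<^sub>R D1 t"
  defines "D1' \<equiv> vector_derivative D1 (at t)"
  shows "tangent \<gamma> t \<bullet> D1' = - d1 t"
    and "(tangent \<gamma> has_vector_derivative wedge (D1 t) D1' (tangent \<gamma> t)) (at t)"
    and "(D1 has_vector_derivative wedge (D1 t) D1' (D1 t)) (at t)"
proof -
  have dD1: "(D1 has_vector_derivative D1') (at t)"
    using smooth_on_real_vector_derivative(1)[OF assms(1,3)] assms(4) by (simp add: D1'_def)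
  have dT: "(tangent \<gamma> has_vector_derivative d1 t *\<^sub>R D1 t) (at t)"
    using tangent_has_vector_derivative[OF assms(1,2,4)] D1 assms(4) by simp
  have D1_D1': "D1 t \<bullet> D1' = 0"
    using inner_derivative_eq_0_if_constant_on[OF assms(1,4), of D1 D1 1, OF _ dD1 dD1] D1
    by (auto simp: norm_eq_1 inner_commute)
  show T_D1': "tangent \<gamma> t \<bullet> D1' = - d1 t"
    using inner_derivative_eq_0_if_constant_on[OF assms(1,4), of "tangent \<gamma>" D1 0, OF _ dT dD1] D1 assms(4)
    by (auto simp: norm_eq_1 inner_commute)
  show "(tangent \<gamma> has_vector_derivative wedge (D1 t) D1' (tangent \<gamma> t)) (at t)"
    "(D1 has_vector_derivative wedge (D1 t) D1' (D1 t)) (at t)"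
    using dT dD1 D1 T_D1' D1_D1' assms(4) by (simp_all add: wedge_apply norm_eq_1 inner_commute)
qed

lemma tangent_derivative_imp_frame_typeD:
  fixes D1 :: "real \<Rightarrow> real^4"
  assumes I: "open_interval I" and "arclength_curve I \<gamma>"
    and "smooth_on_real I D1" "smooth_on_real I d1"
    and D1: "\<forall>t\<in>I. norm (D1 t) = 1 \<and> D1 t \<bullet> tangent \<gamma> t = 0 \<and>
      vector_derivative (tangent \<gamma>) (at t) = d1 t *\<^sub>R D1 t"
  shows "\<exists>Z. frame_typeD I \<gamma> Z"
proof -
  have "is_interval I" "open I"
    using I by (simp_all add: open_interval_def)
  obtain t0 where "t0 \<in> I"
    using I by (auto simp: open_interval_def)
  define D1' where "D1' t = vector_derivative D1 (at t)" for t
  define \<Omega> where "\<Omega> t = wedge (D1 t) (D1' t)" for t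
  note ode = tangent_and_normal_solve_wedge_ode[OF \<open>open I\<close> assms(2,3) _ D1, folded D1'_def \<Omega>_def]
  have "smooth_on_real I D1'"
    unfolding D1'_def by (rule smooth_on_real_vector_derivative(2)[OF \<open>open I\<close> assms(3)])
  then have "smooth_on_real I \<Omega>"
    unfolding \<Omega>_def by (rule smooth_on_real_wedge[OF \<open>open I\<close> assms(3)])
  have "skew (\<Omega> t)" for t
    by (simp add: \<Omega>_def skew_wedge)
  have "norm (tangent \<gamma> t0) = 1" "norm (D1 t0) = 1" "tangent \<gamma> t0 \<bullet> D1 t0 = 0"
    using assms(2) D1 \<open>t0 \<in> I\<close> by (auto simp: arclength_curve_def inner_commute)
  then obtain Q where Q: "orthogonal_matrix Q" "Q $ 1 = tangent \<gamma> t0" "Q $ 2 = D1 t0"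
    by (rule orthonormal_pair_extends_to_orthogonal_matrix)
  obtain Z where Z: "smooth_on_real I Z" "Z t0 = Q" "\<And>t. t \<in> I \<Longrightarrow> orthogonal_matrix (Z t)"
    "\<And>t i. t \<in> I \<Longrightarrow> ((\<lambda>s. Z s $ i) has_vector_derivative \<Omega> t (Z t $ i)) (at t)"
    by (rule skew_linear_ode_orthonormal_frame[OF \<open>is_interval I\<close> \<open>open I\<close> \<open>t0 \<in> I\<close>
          \<open>smooth_on_real I \<Omega>\<close> \<open>\<And>t. skew (\<Omega> t)\<close> Q(1)]) blast
  have rows: "Z t $ 1 = tangent \<gamma> t" "Z t $ 2 = D1 t" if "t \<in> I" for t
    using skew_linear_ode_unique[OF \<open>is_interval I\<close> \<open>t0 \<in> I\<close> that \<open>\<And>t. skew (\<Omega> t)\<close> Z(4)]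
      ode(2,3) Z(2) Q by simp_all
  have coeff: "coeff_matrix Z t = typeD_matrix (d1 t) (D1' t \<bullet> Z t $ 3) (D1' t \<bullet> Z t $ 4)"
    if "t \<in> I" for t
    using coeff_matrix_wedge_frame[of Z t "D1' t", OF Z(3)[OF that]] Z(4)[OF that] rows[OF that]
      ode(1)[OF that] by (simp add: \<Omega>_def inner_commute)
  have smooth_coeff: "smooth_on_real I (\<lambda>t. D1' t \<bullet> Z t $ i)" for i
    using smooth_on_real_bilinear[OF bounded_bilinear_inner \<open>open I\<close> \<open>smooth_on_real I D1'\<close>
        smooth_on_real_linear[OF bounded_linear_vec_nth Z(1)]] .
  show ?thesis
    using frame_typeD_intro[OF Z(1,3) rows(1) assms(4) smooth_coeff smooth_coeff coeff] by blast
qed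

theorem proposition1:
  fixes I :: "real set" and \<gamma> :: "real \<Rightarrow> real^4"
  assumes "open_interval I" and "arclength_curve I \<gamma>"
  shows "(\<exists>Z. frame_typeD I \<gamma> Z) \<longleftrightarrow>
         (\<exists>(D1 :: real \<Rightarrow> real^4) (d1 :: real \<Rightarrow> real).
            smooth_on_real I D1 \<and> smooth_on_real I d1 \<and>
            (\<forall>t\<in>I. norm (D1 t) = 1 \<and> D1 t \<bullet> tangent \<gamma> t = 0 \<and>
                    vector_derivative (tangent \<gamma>) (at t) = d1 t *\<^sub>R D1 t))"
proof
  assume "\<exists>Z. frame_typeD I \<gamma> Z"
  then obtain Z where "frame_typeD I \<gamma> Z" ..
  moreover have "open I"
    using assms(1) by (simp add: open_interval_def)
  ultimately show "\<exists>D1 d1. smooth_on_real I D1 \<and> smooth_on_real I d1 \<and>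
      (\<forall>t\<in>I. norm (D1 t) = 1 \<and> D1 t \<bullet> tangent \<gamma> t = 0 \<and>
        vector_derivative (tangent \<gamma>) (at t) = d1 t *\<^sub>R D1 t)"
    using frame_typeD_tangent_derivative by blast
next
  assume "\<exists>D1 d1. smooth_on_real I D1 \<and> smooth_on_real I d1 \<and>
      (\<forall>t\<in>I. norm (D1 t) = 1 \<and> D1 t \<bullet> tangent \<gamma> t = 0 \<and>
        vector_derivative (tangent \<gamma>) (at t) = d1 t *\<^sub>R D1 t)"
  then show "\<exists>Z. frame_typeD I \<gamma> Z"
    using tangent_derivative_imp_frame_typeD[OF assms] by blast
qed

end
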